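(* Let $\Sigma=\{0,1\}$. For any $D\in\mathbb N_+$ there exists $\mathcal F\subseteq\Sigma^{\Sigma^*}$ such that $\mathrm{Ldim}(\mathcal F)=D$ and $\mathrm{VCdim}(\mathcal F)=1$ over the domain $\Sigma^*$, and $\mathrm{VCdim}(\mathcal F^{\mathrm{e2e}(T)})=D$ for every $T>D$, even over the domain $\Sigma^n$ with $n=\lceil\log_2 D\rceil+1$.
   Context: For $f:\Sigma^*\to\Sigma$, $\bar f(\mathbf x)$ is $\mathbf x$ with $f(\mathbf x)$ appended; $f^{\mathrm{CoT}(T)}=\bar f^{\circ T}$; $f^{\mathrm{e2e}(T)}(\mathbf x)$ is the last token of $f^{\mathrm{CoT}(T)}(\mathbf x)$; $\mathcal F^{\mathrm{e2e}(T)}=\{f^{\mathrm{e2e}(T)}:f\in\mathcal F\}$. $\mathrm{VCdim}$ is the VC dimension. Littlestone dimension $\mathrm{Ldim}(\mathcal F)$: the largest depth $d$ of a complete binary tree with nodes labeled by elements of $\Sigma^*$ such that for every root-to-leaf path $\epsilon\in\{0,1\}^d$ some $f\in\mathcal F$ satisfies $f(\text{$i$-th node on the path})=\epsilon_i$ for all $i\in[d]$ (with $\epsilon_i=1$ meaning the path turns right). *)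

theory Defs
  imports Complex_Main "HOL-Library.Extended_Nat"
begin

text \<open>Alphabet Sigma = {0,1} is rendered as bool (False = 0, True = 1);
  strings Sigma* are bool lists.\<close>

definition shatters :: "('a \<Rightarrow> bool) set \<Rightarrow> 'a set \<Rightarrow> bool" where
  "shatters F S \<longleftrightarrow> (\<forall>A\<subseteq>S. \<exists>f\<in>F. \<forall>x\<in>S. f x = (x \<in> A))"

definition VCdim :: "'a set \<Rightarrow> ('a \<Rightarrow> bool) set \<Rightarrow> enat" where
  "VCdim X F = Sup {enat (card S) | S. S \<subseteq> X \<and> finite S \<and> shatters F S}"

text \<open>Littlestone dimension: a complete binary tree of depth d is given by a
  labelling t of the nodes, where a node is identified by the path (bool list of
  length < d) leading to it from the root (True = turn right).\<close>
definition Ldim :: "('a \<Rightarrow> bool) set \<Rightarrow> enat" where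
  "Ldim F = Sup {enat d | d. \<exists>t :: bool list \<Rightarrow> 'a.
      \<forall>eps. length eps = d \<longrightarrow> (\<exists>f\<in>F. \<forall>i<d. f (t (take i eps)) = eps ! i)}"

definition bar :: "(bool list \<Rightarrow> bool) \<Rightarrow> bool list \<Rightarrow> bool list" where
  "bar f x = x @ [f x]"

definition CoT :: "nat \<Rightarrow> (bool list \<Rightarrow> bool) \<Rightarrow> bool list \<Rightarrow> bool list" where
  "CoT T f = (bar f ^^ T)"

definition e2e :: "nat \<Rightarrow> (bool list \<Rightarrow> bool) \<Rightarrow> bool list \<Rightarrow> bool" where
  "e2e T f x = last (CoT T f x)"

end

theory Submission
  imports Defs "HOL-Library.Sublist"
begin

text \<open>Every hypothesis carries a label \<open>b \<in> {0,1}\<^sup>D\<close>, and each of its values is a test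
  ``is the word \<open>w y\<close> a prefix of \<open>b\<close>?''. The prefixes of one \<open>b\<close> form a chain, so no two
  points are shattered and the VC dimension is 1; there are \<open>2\<^sup>D\<close> hypotheses, so the
  Littlestone dimension is at most \<open>D\<close>, and the tree whose node at path \<open>u\<close> tests the prefix
  \<open>u @ [1]\<close> shows that it is exactly \<open>D\<close>. Started on one of \<open>D\<close> distinct codewords \<open>c\<^sub>i\<close> of
  length \<open>n\<close>, a hypothesis spells out \<open>b\<close> bit by bit under chain of thought and afterwards
  answers \<open>b\<^sub>i\<close>, so the end-to-end class shatters the codewords.\<close>

lemma card_bool_lists_length: "card {xs :: bool list. length xs = d} = 2 ^ d"
  and finite_bool_lists_length: "finite {xs :: bool list. length xs = d}"
  using card_lists_length_eq[of "UNIV :: bool set" d] finite_lists_length_eq[of "UNIV :: bool set" d]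
  by (simp_all add: card_UNIV_bool)

lemma ex_inj_on_bool_lists_length:
  assumes "D \<le> 2 ^ n"
  obtains e :: "nat \<Rightarrow> bool list" where "inj_on e {..<D}" "\<And>i. i < D \<Longrightarrow> length (e i) = n"
proof -
  have "card {..<D} \<le> card {xs :: bool list. length xs = n}"
    using assms by (simp add: card_bool_lists_length)
  then obtain e :: "nat \<Rightarrow> bool list" where "e ` {..<D} \<subseteq> {xs. length xs = n}" "inj_on e {..<D}"
    using card_le_inj[OF finite_lessThan finite_bool_lists_length] by blast
  then show ?thesis using that by blast
qed

lemma le_power2_nat_ceiling_log2: "m \<le> 2 ^ nat \<lceil>log 2 (real m)\<rceil>"
proof (rule ccontr)
  assume "\<not> m \<le> 2 ^ nat \<lceil>log 2 (real m)\<rceil>"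
  then have "nat \<lceil>log 2 (real m)\<rceil> < log 2 (real m)"
    by (intro less_log2_of_power) simp
  then show False by linarith
qed

lemma nth_equalityI_take:
  assumes "length xs = length ys"
    and "\<And>i. i < length xs \<Longrightarrow> take i xs = take i ys \<Longrightarrow> xs ! i = ys ! i"
  shows "xs = ys"
proof -
  have "take k xs = take k ys" if "k \<le> length xs" for k
    using that
  proof (induction k)
    case (Suc k)
    then show ?case using assms by (simp add: take_Suc_conv_app_nth)
  qed simp
  from this[of "length xs"] show ?thesis using assms(1) by simp
qed

lemma prefix_take_snoc_iff:
  assumes "k < length xs"
  shows "prefix (take k xs @ [x]) xs \<longleftrightarrow> xs ! k = x"
proof -
  have "xs = take k xs @ xs ! k # drop (Suc k) xs"
    using assms by (simp add: id_take_nth_drop)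
  then have "prefix (take k xs @ [x]) xs \<longleftrightarrow> prefix (take k xs @ [x]) (take k xs @ xs ! k # drop (Suc k) xs)"
    by (simp only: flip: \<open>xs = _\<close>)
  then show ?thesis by auto
qed

lemma two_power_card_le_if_shatters:
  assumes "finite F" "shatters F S" "finite S"
  shows "2 ^ card S \<le> card F"
proof -
  obtain g where g: "\<And>A. A \<subseteq> S \<Longrightarrow> g A \<in> F \<and> (\<forall>x\<in>S. g A x = (x \<in> A))"
    using assms(2) unfolding shatters_def by metis
  have "inj_on g (Pow S)"
  proof (rule inj_onI)
    fix A B assume "A \<in> Pow S" "B \<in> Pow S" "g A = g B"
    then show "A = B" using g[of A] g[of B] by auto
  qed
  moreover have "g ` Pow S \<subseteq> F" using g by auto
  ultimately have "card (Pow S) \<le> card F" using card_inj_on_le assms(1) by blast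
  then show ?thesis using card_Pow[OF assms(3)] by simp
qed

lemma card_le_if_shatters:
  assumes "finite F" "card F \<le> 2 ^ D" "shatters F S"
  shows "card S \<le> D"
proof (cases "finite S")
  case True
  then have "(2::nat) ^ card S \<le> 2 ^ D"
    using two_power_card_le_if_shatters[OF assms(1,3)] assms(2) by linarith
  then show ?thesis by simp
qed simp

lemma VCdim_eqI:
  assumes "\<And>S. S \<subseteq> X \<Longrightarrow> finite S \<Longrightarrow> shatters F S \<Longrightarrow> card S \<le> D"
    and "Z \<subseteq> X" "finite Z" "shatters F Z" "card Z = D"
  shows "VCdim X F = enat D"
  unfolding VCdim_def
proof (rule antisym)
  show "Sup {enat (card S) |S. S \<subseteq> X \<and> finite S \<and> shatters F S} \<le> enat D"
    by (rule Sup_least) (use assms(1) in auto)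
  show "enat D \<le> Sup {enat (card S) |S. S \<subseteq> X \<and> finite S \<and> shatters F S}"
    by (rule Sup_upper) (use assms(2-5) in auto)
qed

definition shatters_tree :: "('a \<Rightarrow> bool) set \<Rightarrow> (bool list \<Rightarrow> 'a) \<Rightarrow> nat \<Rightarrow> bool" where
  "shatters_tree F t d \<longleftrightarrow>
     (\<forall>eps. length eps = d \<longrightarrow> (\<exists>f\<in>F. \<forall>i<d. f (t (take i eps)) = eps ! i))"

lemma Ldim_eq_Sup_shatters_tree: "Ldim F = Sup {enat d | d. \<exists>t. shatters_tree F t d}"
  unfolding Ldim_def shatters_tree_def ..

lemma two_power_le_card_if_shatters_tree:
  assumes "finite F" "shatters_tree F t d"
  shows "2 ^ d \<le> card F"
proof -
  obtain g where g: "\<And>eps. length eps = d \<Longrightarrow> g eps \<in> F \<and> (\<forall>i<d. g eps (t (take i eps)) = eps ! i)"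
    using assms(2) unfolding shatters_tree_def by metis
  have "inj_on g {eps. length eps = d}"
  proof (rule inj_onI)
    fix xs ys assume xs: "xs \<in> {eps. length eps = d}" and ys: "ys \<in> {eps. length eps = d}"
      and "g xs = g ys"
    show "xs = ys"
    proof (rule nth_equalityI_take)
      show "length xs = length ys" using xs ys by simp
      fix i assume "i < length xs" "take i xs = take i ys"
      moreover have "xs ! i = g xs (t (take i xs))" "ys ! i = g ys (t (take i ys))"
        using g[of xs] g[of ys] xs ys \<open>i < length xs\<close> by simp_all
      ultimately show "xs ! i = ys ! i" using \<open>g xs = g ys\<close> \<open>take i xs = take i ys\<close> by simp
    qed
  qed
  moreover have "g ` {eps. length eps = d} \<subseteq> F" using g by auto
  ultimately have "card {eps :: bool list. length eps = d} \<le> card F"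
    using card_inj_on_le assms(1) by blast
  then show ?thesis by (simp add: card_bool_lists_length)
qed

lemma depth_le_if_shatters_tree:
  assumes "finite F" "card F \<le> 2 ^ D" "shatters_tree F t d"
  shows "d \<le> D"
proof -
  have "(2::nat) ^ d \<le> 2 ^ D"
    using two_power_le_card_if_shatters_tree[OF assms(1,3)] assms(2) by linarith
  then show ?thesis by simp
qed

lemma Ldim_eqI:
  assumes "\<And>t d. shatters_tree F t d \<Longrightarrow> d \<le> D" and "shatters_tree F t D"
  shows "Ldim F = enat D"
  unfolding Ldim_eq_Sup_shatters_tree
proof (rule antisym)
  show "Sup {enat d |d. \<exists>t. shatters_tree F t d} \<le> enat D"
    by (rule Sup_least) (use assms(1) in auto)
  show "enat D \<le> Sup {enat d |d. \<exists>t. shatters_tree F t d}"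
    by (rule Sup_upper) (use assms(2) in auto)
qed

definition prefix_hyp :: "('a \<Rightarrow> 'b list option) \<Rightarrow> 'b list \<Rightarrow> 'a \<Rightarrow> bool" where
  "prefix_hyp w b y = (case w y of None \<Rightarrow> False | Some u \<Rightarrow> prefix u b)"

lemma prefix_hyp_antimono:
  assumes "w p = Some u" "w q = Some v" "prefix u v" "prefix_hyp w b q"
  shows "prefix_hyp w b p"
  using assms unfolding prefix_hyp_def by (auto intro: prefix_order.trans)

lemma card_le_1_if_shatters_prefix_hyp:
  assumes "shatters (prefix_hyp w ` B) S"
  shows "card S \<le> 1"
proof (rule ccontr)
  assume "\<not> card S \<le> 1"
  moreover from this have "finite S" using card.infinite by fastforce
  ultimately have "\<not> (\<forall>p\<in>S. \<forall>q\<in>S. p = q)"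
    using card_le_Suc0_iff_eq by (metis One_nat_def)
  then obtain p q where pq: "p \<in> S" "q \<in> S" "p \<noteq> q" by blast
  have realize: "\<exists>b\<in>B. \<forall>x\<in>S. prefix_hyp w b x = (x \<in> A)" if "A \<subseteq> S" for A
    using assms that unfolding shatters_def by blast
  obtain b where "prefix_hyp w b p" "prefix_hyp w b q"
    using realize[of "{p, q}"] pq by auto
  then obtain u v where uv: "w p = Some u" "w q = Some v" "prefix u b" "prefix v b"
    unfolding prefix_hyp_def by (auto split: option.splits)
  obtain bp where bp: "\<forall>x\<in>S. prefix_hyp w bp x = (x = p)"
    using realize[of "{p}"] pq(1) by auto
  obtain bq where bq: "\<forall>x\<in>S. prefix_hyp w bq x = (x = q)"
    using realize[of "{q}"] pq(2) by auto
  from uv(3,4) consider "prefix u v" | "prefix v u" using prefix_same_cases by blast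
  then show False
  proof cases
    case 1
    then show False using prefix_hyp_antimono[of w p u q v bq, OF uv(1,2) 1] bq pq by simp
  next
    case 2
    then show False using prefix_hyp_antimono[of w q v p u bp, OF uv(2,1) 2] bp pq by simp
  qed
qed

lemma CoT_Suc: "CoT (Suc k) f x = bar f (CoT k f x)"
  unfolding CoT_def by simp

lemma CoT_eq_append_take:
  assumes "\<And>k. k < length w \<Longrightarrow> f (x @ take k w) = w ! k" and "T \<le> length w"
  shows "CoT T f x = x @ take T w"
  using assms(2)
proof (induction T)
  case 0
  then show ?case unfolding CoT_def by simp
next
  case (Suc T)
  then show ?case using assms(1) by (simp add: CoT_Suc bar_def take_Suc_conv_app_nth)
qed

lemma e2e_Suc_eq_nth:
  assumes "\<And>k. k < length w \<Longrightarrow> f (x @ take k w) = w ! k" and "k < length w"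
  shows "e2e (Suc k) f x = w ! k"
  using CoT_eq_append_take[where T = "Suc k", OF assms(1)] assms(2)
  by (simp add: e2e_def take_Suc_conv_app_nth)

locale fixed_length_code =
  fixes D n :: nat and code :: "nat \<Rightarrow> bool list"
  assumes inj_code: "inj_on code {..<D}"
    and length_code: "i < D \<Longrightarrow> length (code i) = n"
begin

text \<open>On \<open>code i @ u\<close> a hypothesis with label \<open>b\<close> answers, for \<open>|u| < D\<close>, whether \<open>u @ [True]\<close>
  is a prefix of \<open>b\<close> (the bit \<open>b ! |u|\<close> when \<open>u\<close> is a prefix of \<open>b\<close>), and for \<open>|u| \<ge> D\<close>, whether
  \<open>u ! i\<close> holds and \<open>take D u = b\<close>.\<close>

definition probe :: "bool list \<Rightarrow> bool list option" where
  "probe y =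
     (if n \<le> length y \<and> take n y \<in> code ` {..<D} then
        let u = drop n y; i = the_inv_into {..<D} code (take n y) in
        if length u < D then Some (u @ [True])
        else if u ! i then Some (take D u) else None
      else None)"

definition code_class :: "(bool list \<Rightarrow> bool) set" where
  "code_class = prefix_hyp probe ` {b. length b = D}"

lemma probe_code_append:
  assumes "i < D"
  shows "probe (code i @ u) =
           (if length u < D then Some (u @ [True]) else if u ! i then Some (take D u) else None)"
  using assms length_code[OF assms] the_inv_into_f_f[OF inj_code, of i]
  unfolding probe_def by (simp add: Let_def)

lemma prefix_hyp_code_take:
  assumes "i < D" "length b = D" "k < D"
  shows "prefix_hyp probe b (code i @ take k b) = b ! k"
  using assms prefix_take_snoc_iff[of k b True]
  by (simp add: prefix_hyp_def probe_code_append)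

lemma prefix_hyp_code_append:
  assumes "i < D" "length b = D"
  shows "prefix_hyp probe b (code i @ b @ v) = b ! i"
  using assms by (simp add: prefix_hyp_def probe_code_append nth_append)

lemma e2e_prefix_hyp_code:
  assumes "i < D" "length b = D" "D < T"
  shows "e2e T (prefix_hyp probe b) (code i) = b ! i"
proof -
  obtain k where T: "T = Suc k" and "D \<le> k" using assms(3) by (cases T) auto
  define w where "w = b @ replicate (T - D) (b ! i)"
  have spells_w: "prefix_hyp probe b (code i @ take j w) = w ! j" if "j < length w" for j
  proof (cases "j < D")
    case True
    then show ?thesis using prefix_hyp_code_take[OF assms(1,2) True] assms(2)
      by (simp add: w_def nth_append)
  next
    case False
    then have "take j w = b @ replicate (j - D) (b ! i)"
      using assms(2) that by (simp add: w_def min_def)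
    then show ?thesis using prefix_hyp_code_append[OF assms(1,2)] False that assms(2)
      by (simp add: w_def nth_append)
  qed
  have "k < length w" using \<open>D \<le> k\<close> assms(2) by (simp add: w_def T)
  with spells_w have "e2e T (prefix_hyp probe b) (code i) = w ! k"
    unfolding T by (rule e2e_Suc_eq_nth)
  also have "\<dots> = b ! i" using \<open>D \<le> k\<close> assms(2) by (simp add: w_def nth_append T)
  finally show ?thesis .
qed

lemma finite_code_class: "finite code_class"
  and card_code_class: "card code_class \<le> 2 ^ D"
  unfolding code_class_def
  using finite_bool_lists_length[of D] card_image_le[OF finite_bool_lists_length, of _ D]
  by (auto simp: card_bool_lists_length)

lemma Ldim_code_class:
  assumes "D \<ge> 1"
  shows "Ldim code_class = enat D"
proof (rule Ldim_eqI)
  show "d \<le> D" if "shatters_tree code_class t d" for t d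
    using depth_le_if_shatters_tree[OF finite_code_class card_code_class that] .
  show "shatters_tree code_class (\<lambda>u. code 0 @ u) D"
    unfolding shatters_tree_def code_class_def
  proof (intro allI impI)
    fix eps :: "bool list" assume "length eps = D"
    then have "\<forall>i<D. prefix_hyp probe eps (code 0 @ take i eps) = eps ! i"
      using prefix_hyp_code_take assms by simp
    then show "\<exists>f\<in>prefix_hyp probe ` {b. length b = D}. \<forall>i<D. f (code 0 @ take i eps) = eps ! i"
      using \<open>length eps = D\<close> by blast
  qed
qed

lemma VCdim_code_class:
  assumes "D \<ge> 1"
  shows "VCdim UNIV code_class = 1"
proof -
  have "shatters code_class {code 0}"
    unfolding shatters_def
  proof (intro allI impI)
    fix A assume "A \<subseteq> {code 0}"
    define b where "b = (code 0 \<in> A) # replicate (D - 1) False"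
    have "length b = D" using assms by (simp add: b_def)
    moreover have "prefix_hyp probe b (code 0) = (code 0 \<in> A)"
      using prefix_hyp_code_take[OF _ \<open>length b = D\<close>, of 0 0] assms by (simp add: b_def)
    ultimately show "\<exists>f\<in>code_class. \<forall>x\<in>{code 0}. f x = (x \<in> A)"
      unfolding code_class_def by auto
  qed
  then have "VCdim UNIV code_class = enat 1"
    by (intro VCdim_eqI[where Z = "{code 0}"])
      (auto simp: code_class_def dest: card_le_1_if_shatters_prefix_hyp)
  then show ?thesis by (simp add: one_enat_def)
qed

lemma VCdim_e2e_code_class:
  assumes "D < T" "code ` {..<D} \<subseteq> X"
  shows "VCdim X (e2e T ` code_class) = enat D"
proof (rule VCdim_eqI[where Z = "code ` {..<D}"])
  show "card S \<le> D" if "shatters (e2e T ` code_class) S" for S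
    using card_le_if_shatters[OF _ _ that] finite_code_class card_code_class
      card_image_le[OF finite_code_class, of "e2e T"] by auto
  show "card (code ` {..<D}) = D" using card_image[OF inj_code] by simp
  show "shatters (e2e T ` code_class) (code ` {..<D})"
    unfolding shatters_def
  proof (intro allI impI)
    fix A assume "A \<subseteq> code ` {..<D}"
    define b where "b = map (\<lambda>j. code j \<in> A) [0..<D]"
    have "length b = D" by (simp add: b_def)
    then have "\<forall>x\<in>code ` {..<D}. e2e T (prefix_hyp probe b) x = (x \<in> A)"
      using e2e_prefix_hyp_code assms(1) by (auto simp: b_def)
    then show "\<exists>f\<in>e2e T ` code_class. \<forall>x\<in>code ` {..<D}. f x = (x \<in> A)"
      using \<open>length b = D\<close> unfolding code_class_def by auto
  qed
qed (use assms(2) in auto)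

end

theorem theoremE3:
  fixes D :: nat
  assumes "D \<ge> 1"
  shows "\<exists>F :: (bool list \<Rightarrow> bool) set.
           Ldim F = enat D \<and> VCdim UNIV F = 1 \<and>
           (\<forall>T. T > D \<longrightarrow>
              VCdim UNIV (e2e T ` F) = enat D \<and>
              VCdim {x. length x = nat \<lceil>log 2 (real D)\<rceil> + 1} (e2e T ` F) = enat D)"
proof -
  define n where "n = nat \<lceil>log 2 (real D)\<rceil> + 1"
  have "D \<le> 2 ^ n"
    using le_power2_nat_ceiling_log2[of D] unfolding n_def
    by (metis le_add1 le_trans one_le_numeral power_increasing)
  then obtain code where "fixed_length_code D n code"
    using ex_inj_on_bool_lists_length unfolding fixed_length_code_def by metis
  then interpret fixed_length_code D n code .
  have codes: "code ` {..<D} \<subseteq> {x. length x = n}" using length_code by auto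
  show ?thesis
  proof (intro exI conjI allI impI)
    show "Ldim code_class = enat D" using Ldim_code_class[OF assms] .
    show "VCdim UNIV code_class = 1" using VCdim_code_class[OF assms] .
    fix T assume "D < T"
    show "VCdim UNIV (e2e T ` code_class) = enat D"
      using VCdim_e2e_code_class[OF \<open>D < T\<close>] by simp
    show "VCdim {x. length x = nat \<lceil>log 2 (real D)\<rceil> + 1} (e2e T ` code_class) = enat D"
      using VCdim_e2e_code_class[OF \<open>D < T\<close> codes] unfolding n_def .
  qed
qed

end
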